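(* Let $\mathbf{Y}|\mathbf{X}=\mathbf{x}\sim\mathcal{N}(\mathbf{x},\sigma^2\mathbf{I}_n)$ with $\sigma>0$, with transition density $f_{\mathbf{Y}|\mathbf{X}}$. Consider the maximum likelihood estimator of $\vec{\mathbf{X}}$ from $\vec{\mathbf{Y}}=\vec{\mathbf{y}}$, $$\hat{\boldsymbol{\ell}}_{\mathrm{MLE}}(\vec{\mathbf{y}})\in\arg\max_{\mathbf{t}\in\vec{\mathbb{R}}_n}\sum_{\pi\in\mathcal{P}}f_{\mathbf{Y}|\mathbf{X}}(\mathbf{P}_\pi\vec{\mathbf{y}}\,|\,\mathbf{t}).$$ Then the MLE is given by $$\hat{\boldsymbol{\ell}}_{\mathrm{MLE}}(\vec{\mathbf{y}})\in\left\{\mathbf{t}\in\vec{\mathbb{R}}_n:\ \sum_{\pi\in\mathcal{P}}\mathbf{P}_\pi\vec{\mathbf{y}}\,e^{\frac{(\mathbf{P}_\pi\vec{\mathbf{y}})^T\mathbf{t}}{\sigma^2}}=\mathbf{t}\sum_{\pi\in\mathcal{P}}e^{\frac{(\mathbf{P}_\pi\vec{\mathbf{y}})^T\mathbf{t}}{\sigma^2}}\right\},$$ and if this set is empty one sets $\hat{\boldsymbol{\ell}}_{\mathrm{MLE}}(\vec{\mathbf{y}})=\vec{\mathbf{y}}$.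
   Context: For $\mathbf{v}\in\mathbb{R}^n$, $\vec{\mathbf{v}}$ is $\mathbf{v}$ sorted in ascending order. $\vec{\mathbb{R}}_n$ is the set of vectors in $\mathbb{R}^n$ whose entries are in ascending order. $\mathcal{P}$ is the set of permutations of $\{1,\dots,n\}$ and $\mathbf{P}_\pi$ the permutation matrix of $\pi$. *)

theory Defs
  imports "HOL-Probability.Distributions" "HOL-Combinatorics.Permutations"
begin

text \<open>Vectors in R^n are real lists of length n; entries indexed 0..n-1.\<close>

definition gauss_trans_density :: "real \<Rightarrow> real list \<Rightarrow> real list \<Rightarrow> real" where
  "gauss_trans_density \<sigma> y x = (\<Prod>i<length y. normal_density (x ! i) \<sigma> (y ! i))"

definition perm_vec :: "(nat \<Rightarrow> nat) \<Rightarrow> real list \<Rightarrow> real list" where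
  "perm_vec \<pi> v = map (\<lambda>i. v ! \<pi> i) [0..<length v]"

definition perms :: "nat \<Rightarrow> (nat \<Rightarrow> nat) set" where
  "perms n = {\<pi>. \<pi> permutes {..<n}}"

definition inner_list :: "real list \<Rightarrow> real list \<Rightarrow> real" where
  "inner_list a b = (\<Sum>j<length a. a ! j * b ! j)"

text \<open>The likelihood of t given the sorted observation ys.\<close>
definition perm_likelihood :: "real \<Rightarrow> real list \<Rightarrow> real list \<Rightarrow> real" where
  "perm_likelihood \<sigma> ys t = (\<Sum>\<pi>\<in>perms (length ys). gauss_trans_density \<sigma> (perm_vec \<pi> ys) t)"

definition sorted_vecs :: "nat \<Rightarrow> real list set" where
  "sorted_vecs n = {t. length t = n \<and> sorted t}"

end

theory Submission
  imports Defs
begin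

(* Permuting the argument t of the likelihood only reindexes the sum over permutations of the
   observations, so the likelihood is symmetric in t and a maximiser over sorted vectors is a
   global maximiser. There the partial derivative in t_i vanishes. It equals
   sum_pi f_pi(t) ((P_pi y)_i - t_i) / sigma^2, and each Gaussian density f_pi(t) is a positive
   factor independent of pi times exp ((P_pi y)^T t / sigma^2); cancelling that factor gives the
   fixed-point equation. *)

lemma perm_vec_eq_permute_list: "perm_vec = permute_list"
  by (simp add: fun_eq_iff perm_vec_def permute_list_def)

lemma gauss_trans_density_permute_list:
  assumes "q permutes {..<length y}" "length x = length y"
  shows "gauss_trans_density \<sigma> (permute_list q y) (permute_list q x) = gauss_trans_density \<sigma> y x"
  unfolding gauss_trans_density_def
  using prod.permute[OF assms(1), of "\<lambda>j. normal_density (x ! j) \<sigma> (y ! j)"] assms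
  by (simp add: permute_list_nth)

lemma perm_likelihood_permute_list:
  assumes q: "q permutes {..<length ys}" and len: "length t = length ys"
  shows "perm_likelihood \<sigma> ys (permute_list q t) = perm_likelihood \<sigma> ys t"
proof -
  have q': "inv q permutes {..<length ys}"
    using q by (rule permutes_inv)
  have "gauss_trans_density \<sigma> (permute_list \<pi> ys) (permute_list q t)
      = gauss_trans_density \<sigma> (permute_list (\<pi> \<circ> inv q) ys) t" for \<pi>
  proof -
    have "permute_list (inv q) (permute_list q t) = t"
      using q len by (simp flip: permute_list_compose[OF q'[folded len]] add: permutes_inv_o)
    then show ?thesis
      using gauss_trans_density_permute_list[of "inv q" "permute_list \<pi> ys" "permute_list q t" \<sigma>]
        q' len by (simp add: permute_list_compose)
  qed
  then show ?thesis
    unfolding perm_likelihood_def perms_def perm_vec_eq_permute_list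
    using sum_permutations_compose_right[OF q',
        of "\<lambda>\<pi>. gauss_trans_density \<sigma> (permute_list \<pi> ys) t"]
    by simp
qed

lemma perm_likelihood_le_of_sorted_max:
  assumes "length s = length ys" "length t = length ys"
    and max: "\<forall>s \<in> sorted_vecs (length ys). perm_likelihood \<sigma> ys s \<le> perm_likelihood \<sigma> ys t"
  shows "perm_likelihood \<sigma> ys s \<le> perm_likelihood \<sigma> ys t"
proof -
  obtain q where q: "q permutes {..<length s}" "permute_list q s = sort s"
    by (rule mset_eq_permutation[of "sort s" s]) simp
  then have "perm_likelihood \<sigma> ys s = perm_likelihood \<sigma> ys (sort s)"
    using perm_likelihood_permute_list assms(1) by metis
  also have "\<dots> \<le> perm_likelihood \<sigma> ys t"
    using max assms(1) by (simp add: sorted_vecs_def)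
  finally show ?thesis .
qed

lemma inner_list_permute_list:
  assumes "q permutes {..<length a}" "length b = length a"
  shows "inner_list (permute_list q a) (permute_list q b) = inner_list a b"
  unfolding inner_list_def
  using sum.permute[OF assms(1), of "\<lambda>j. a ! j * b ! j"] assms
  by (simp add: permute_list_nth)

lemma gauss_trans_density_exp:
  "gauss_trans_density \<sigma> y x =
     (1 / sqrt (2 * pi * \<sigma>\<^sup>2)) ^ length y * exp (- (\<Sum>j<length y. (y ! j - x ! j)\<^sup>2) / (2 * \<sigma>\<^sup>2))"
proof -
  have "- (\<Sum>j<length y. (y ! j - x ! j)\<^sup>2) / (2 * \<sigma>\<^sup>2)
      = (\<Sum>j<length y. - (y ! j - x ! j)\<^sup>2 / (2 * \<sigma>\<^sup>2))"
    by (simp add: sum_negf sum_divide_distrib)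
  then show ?thesis
    by (simp add: gauss_trans_density_def normal_density_def exp_sum prod_dividef power_one_over)
qed

lemma gauss_trans_density_factor:
  assumes "length x = length y"
  shows "gauss_trans_density \<sigma> y x = (1 / sqrt (2 * pi * \<sigma>\<^sup>2)) ^ length y
     * exp (- (inner_list y y + inner_list x x) / (2 * \<sigma>\<^sup>2)) * exp (inner_list y x / \<sigma>\<^sup>2)"
proof -
  have "(\<Sum>j<length y. (y ! j - x ! j)\<^sup>2)
      = (\<Sum>j<length y. y ! j * y ! j + x ! j * x ! j - 2 * (y ! j * x ! j))"
    by (simp add: power2_eq_square algebra_simps)
  also have "\<dots> = inner_list y y + inner_list x x - 2 * inner_list y x"
    using assms by (simp add: inner_list_def sum.distrib sum_subtractf sum_distrib_left)
  finally have "- (\<Sum>j<length y. (y ! j - x ! j)\<^sup>2) / (2 * \<sigma>\<^sup>2)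
      = - (inner_list y y + inner_list x x) / (2 * \<sigma>\<^sup>2) + inner_list y x / \<sigma>\<^sup>2"
    by (cases "\<sigma> = 0") (simp_all add: field_simps)
  then show ?thesis
    by (simp only: gauss_trans_density_exp exp_add mult.assoc)
qed

lemma sum_sq_diff_list_update:
  fixes x y :: "real list"
  assumes "i < n" "i < length x"
  shows "(\<Sum>j<n. (y ! j - x[i := x ! i + h] ! j)\<^sup>2)
       = (\<Sum>j<n. (y ! j - x ! j)\<^sup>2) - 2 * h * (y ! i - x ! i) + h\<^sup>2"
proof -
  have "(\<Sum>j<n. (y ! j - x[i := x ! i + h] ! j)\<^sup>2)
      = (\<Sum>j<n. (y ! j - x ! j)\<^sup>2 + (if j = i then h\<^sup>2 - 2 * h * (y ! i - x ! i) else 0))"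
    using assms(2) by (intro sum.cong) (auto simp: nth_list_update power2_eq_square algebra_simps)
  then show ?thesis
    using assms(1) by (simp add: sum.distrib)
qed

lemma gauss_trans_density_update_deriv:
  assumes "\<sigma> \<noteq> 0" "i < length y" "i < length x"
  shows "((\<lambda>h. gauss_trans_density \<sigma> y (x[i := x ! i + h])) has_real_derivative
           gauss_trans_density \<sigma> y x * ((y ! i - x ! i) / \<sigma>\<^sup>2)) (at 0)"
proof -
  define c where "c = (1 / sqrt (2 * pi * \<sigma>\<^sup>2)) ^ length y"
  define Q where "Q = (\<Sum>j<length y. (y ! j - x ! j)\<^sup>2)"
  define d where "d = y ! i - x ! i"
  have density: "(\<lambda>h. gauss_trans_density \<sigma> y (x[i := x ! i + h]))
      = (\<lambda>h. c * exp (- (Q - 2 * h * d + h\<^sup>2) / (2 * \<sigma>\<^sup>2)))"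
    using assms by (simp add: gauss_trans_density_exp sum_sq_diff_list_update c_def Q_def d_def)
  have "gauss_trans_density \<sigma> y x = c * exp (- Q / (2 * \<sigma>\<^sup>2))"
    by (simp add: gauss_trans_density_exp c_def Q_def)
  moreover have "((\<lambda>h. c * exp (- (Q - 2 * h * d + h\<^sup>2) / (2 * \<sigma>\<^sup>2))) has_real_derivative
      c * exp (- Q / (2 * \<sigma>\<^sup>2)) * (d / \<sigma>\<^sup>2)) (at 0)"
    using assms(1) by (auto intro!: derivative_eq_intros simp: field_simps)
  ultimately show ?thesis
    unfolding density d_def by simp
qed

lemma perm_likelihood_update_deriv:
  assumes "\<sigma> \<noteq> 0" "i < length ys" "i < length t"
  shows "((\<lambda>h. perm_likelihood \<sigma> ys (t[i := t ! i + h])) has_real_derivative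
      (\<Sum>\<pi>\<in>perms (length ys). gauss_trans_density \<sigma> (perm_vec \<pi> ys) t
          * ((perm_vec \<pi> ys ! i - t ! i) / \<sigma>\<^sup>2))) (at 0)"
  unfolding perm_likelihood_def
  using assms by (intro DERIV_sum gauss_trans_density_update_deriv) (simp_all add: perm_vec_eq_permute_list)

lemma perm_likelihood_max_stationary:
  assumes "\<sigma> \<noteq> 0" "length t = length ys" "i < length ys"
    and max: "\<And>s. length s = length ys \<Longrightarrow> perm_likelihood \<sigma> ys s \<le> perm_likelihood \<sigma> ys t"
  shows "(\<Sum>\<pi>\<in>perms (length ys). perm_vec \<pi> ys ! i * exp (inner_list (perm_vec \<pi> ys) t / \<sigma>\<^sup>2))
       = t ! i * (\<Sum>\<pi>\<in>perms (length ys). exp (inner_list (perm_vec \<pi> ys) t / \<sigma>\<^sup>2))"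
proof -
  define w where "w \<pi> = exp (inner_list (perm_vec \<pi> ys) t / \<sigma>\<^sup>2)" for \<pi>
  define K where "K = (1 / sqrt (2 * pi * \<sigma>\<^sup>2)) ^ length ys
      * exp (- (inner_list ys ys + inner_list t t) / (2 * \<sigma>\<^sup>2))"
  have "K > 0"
    using assms(1) by (simp add: K_def)
  have density: "gauss_trans_density \<sigma> (perm_vec \<pi> ys) t = K * w \<pi>" if "\<pi> \<in> perms (length ys)" for \<pi>
    using that assms(2) inner_list_permute_list[of \<pi> ys ys]
    by (simp add: gauss_trans_density_factor perms_def perm_vec_eq_permute_list K_def w_def)
  have "(\<Sum>\<pi>\<in>perms (length ys). gauss_trans_density \<sigma> (perm_vec \<pi> ys) t
          * ((perm_vec \<pi> ys ! i - t ! i) / \<sigma>\<^sup>2)) = 0"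
    by (rule DERIV_local_max[OF perm_likelihood_update_deriv zero_less_one]) (use assms in auto)
  then have "K / \<sigma>\<^sup>2 * (\<Sum>\<pi>\<in>perms (length ys). w \<pi> * (perm_vec \<pi> ys ! i - t ! i)) = 0"
    by (simp add: density sum_distrib_left mult_ac)
  then have "(\<Sum>\<pi>\<in>perms (length ys). w \<pi> * (perm_vec \<pi> ys ! i - t ! i)) = 0"
    using \<open>K > 0\<close> assms(1) by simp
  then show ?thesis
    by (simp add: w_def sum_subtractf sum_distrib_left algebra_simps)
qed

theorem lemma2:
  fixes \<sigma> :: real and y t :: "real list"
  assumes "\<sigma> > 0"
    and "t \<in> sorted_vecs (length y)"
    and "\<forall>s \<in> sorted_vecs (length y).
           perm_likelihood \<sigma> (sort y) s \<le> perm_likelihood \<sigma> (sort y) t"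
  shows "\<forall>i < length y.
           (\<Sum>\<pi>\<in>perms (length y). perm_vec \<pi> (sort y) ! i
               * exp (inner_list (perm_vec \<pi> (sort y)) t / \<sigma>\<^sup>2))
         = t ! i * (\<Sum>\<pi>\<in>perms (length y). exp (inner_list (perm_vec \<pi> (sort y)) t / \<sigma>\<^sup>2))"
proof -
  have len: "length t = length (sort y)"
    using assms(2) by (simp add: sorted_vecs_def)
  have max: "perm_likelihood \<sigma> (sort y) s \<le> perm_likelihood \<sigma> (sort y) t"
    if "length s = length (sort y)" for s
    using perm_likelihood_le_of_sorted_max[OF that len] assms(3) by simp
  show ?thesis
    using perm_likelihood_max_stationary[OF _ len _ max] assms(1) by simp
qed

end
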